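(* Let $\textsc{mix}$ be a nice mixture with parameter space $\mathcal{W}$ and constant $a>0$, let $n\ge1$, $x^n\in\mathcal{X}^n$, $\mathbf{P}^n$ a sequence of $n$ probability matrices over $\mathcal{P}_+$, and $\mathbf{w}_1\in\mathcal{W}$. For $1\le i\le j\le n$ write $\ell^*(i,j,\textsc{mix}):=\ell^*(x_i^j,\mathbf{P}_i^j,\textsc{mix})$, where $x_i^j=x_i\dots x_j$ and $\mathbf{P}_i^j=\mathbf{P}_i,\dots,\mathbf{P}_j$. The minima below range over all $1\le s\le n$ and all integers $t_1=1<t_2<\dots<t_s<t_{s+1}=n+1$. 1. If $\alpha=2(1-b^{-1})/a$ with $b>1$, then $$\ell(x^n,\textsc{mix-ogd}(\mathbf{w}_1,\alpha,x^n,\mathbf{P}^n))\le\min_{s,t_2,\dots,t_s}\Big[\frac{a b^2\lvert\mathcal{W}\rvert^2}{4(b-1)}\,s + b\sum_{i=1}^s\ell^*(t_i,t_{i+1}-1,\textsc{mix})\Big].$$ 2. If $\alpha=\frac{2}{a}(1+n^{1/2})^{-1}$ and there is a constant $c>0$ such that $\ell^*(y^k,\mathbf{Q}^k,\textsc{mix})\le c\cdot k$ for all lengths $k\ge1$, all $y^k$ over $\mathcal{X}$ and all sequences $\mathbf{Q}^k$ of probability matrices over $\mathcal{P}_+$, then $$\ell(x^n,\textsc{mix-ogd}(\mathbf{w}_1,\alpha,x^n,\mathbf{P}^n))\le\min_{s,t_2,\dots,t_s}\Big[\big(a s\lvert\mathcal{W}\rvert^2+c\big)\sqrt n+\sum_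{i=1}^s\ell^*(t_i,t_{i+1}-1,\textsc{mix})\Big].$$
   Context: Let $\mathcal{X}=\{1,\dots,N\}$ with $1<N<\infty$, and $\mathcal{P}_+$ the set of probability distributions on $\mathcal{X}$ with positive probability on every letter. Fix $m>1$. A probability matrix over $\mathcal{P}_+$ is $\mathbf{P}=(\mathbf{p}(1)\cdots\mathbf{p}(N))$ with $\mathbf{p}(x)=(p_1(x),\dots,p_m(x))^{\mathsf T}$, $p_i\in\mathcal{P}_+$. $\ell(x,p):=-\log_2p(x)$. A mixture with parameter space $\mathcal{W}\subseteq\mathbb{R}^m$ maps $(\mathbf{w},\mathbf{P})$, $\mathbf{w}\in\mathcal{W}$, to $\textsc{mix}(\mathbf{w},\mathbf{P})\in\mathcal{P}_+$. It is nice if (1) $\mathcal{W}$ is non-empty, compact, convex; (2) $\mathbf{w}\mapsto\ell(x,\textsc{mix}(\mathbf{w},\mathbf{P}))$ is convex on $\mathcal{W}$ and (3) differentiable, for all $\mathbf{P}$ over $\mathcal{P}_+$, $x\in\mathcal{X}$; (4) there is $a>0$ with $\lvert\nabla_{\mathbf{w}}\ell(x,\textsc{mix}(\mathbf{w},\mathbf{P}))\rvert^2\le a\,\ell(x,\textsc{mix}(\mathbf{w},\mathbf{P}))$ for all $\mathbf{w}\in\mathcal{W}$, $\mathbf{P}$, $x$. $\lvert\mathcal{W}\rvert:=\sup_{\mathbf{u},\mathbf{v}\in\mathcal{W}}\lvert\mathbf{u}-\mathbf{v}\rvert$ (Euclidean diameter). Algorithm $\textsc{mix-ogd}(\mathbf{w}_1,\alpha,x^n,\mathbf{P}^n)$: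 for $k=1,\dots,n$ code $x_k$ with $\ell(x_k,\textsc{mix}(\mathbf{w}_k,\mathbf{P}_k))$ bits, then $\mathbf{w}_{k+1}=\mathrm{proj}(\mathbf{w}_k-\alpha\nabla_{\mathbf{w}}\ell(x_k,\textsc{mix}(\mathbf{w},\mathbf{P}_k))|_{\mathbf{w}=\mathbf{w}_k};\mathcal{W})$ with $\mathrm{proj}(\mathbf{v};\mathcal{W})=\arg\min_{\mathbf{w}\in\mathcal{W}}\lvert\mathbf{v}-\mathbf{w}\rvert^2$; its code length is $\ell(x^n,\textsc{mix-ogd}(\mathbf{w}_1,\alpha,x^n,\mathbf{P}^n)):=\sum_{k=1}^n\ell(x_k,\textsc{mix}(\mathbf{w}_k,\mathbf{P}_k))$. For a sequence $y^k$ and matrices $\mathbf{Q}^k$: $\ell^*(y^k,\mathbf{Q}^k,\textsc{mix}):=\min_{\mathbf{w}\in\mathcal{W}}\sum_{j=1}^k\ell(y_j,\textsc{mix}(\mathbf{w},\mathbf{Q}_j))$. *)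

theory Defs
  imports "HOL-Analysis.Analysis"
begin

(* Alphabet X = finite type 'a (CARD('a) > 1 assumed in the theorem);
   mixture components indexed by finite type 'm (CARD('m) = m > 1). *)

definition Pplus :: "('a::finite \<Rightarrow> real) set" where
  "Pplus = {p. (\<forall>x. p x > 0) \<and> (\<Sum>x\<in>UNIV. p x) = 1}"

definition prob_matrix :: "('m::finite \<Rightarrow> 'a::finite \<Rightarrow> real) \<Rightarrow> bool" where
  "prob_matrix P \<longleftrightarrow> (\<forall>i. P i \<in> Pplus)"

definition ell :: "'a \<Rightarrow> ('a \<Rightarrow> real) \<Rightarrow> real" where
  "ell x p = - log 2 (p x)"

definition grad :: "(real^'m \<Rightarrow> real) \<Rightarrow> real^'m \<Rightarrow> real^'m" where
  "grad f w = (SOME D. GDERIV f w :> D)"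

definition nice_mixture ::
  "(real^'m::finite) set \<Rightarrow> (real^'m \<Rightarrow> ('m \<Rightarrow> 'a::finite \<Rightarrow> real) \<Rightarrow> ('a \<Rightarrow> real)) \<Rightarrow> real \<Rightarrow> bool" where
  "nice_mixture W mix a \<longleftrightarrow>
     (\<forall>w\<in>W. \<forall>P. prob_matrix P \<longrightarrow> mix w P \<in> Pplus) \<and>
     W \<noteq> {} \<and> compact W \<and> convex W \<and>
     (\<forall>P x. prob_matrix P \<longrightarrow> convex_on W (\<lambda>w. ell x (mix w P))) \<and>
     (\<forall>P x. prob_matrix P \<longrightarrow> (\<forall>w\<in>W. (\<lambda>v. ell x (mix v P)) differentiable (at w))) \<and>
     a > 0 \<and>
     (\<forall>P x. prob_matrix P \<longrightarrow> (\<forall>w\<in>W.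
        (norm (grad (\<lambda>v. ell x (mix v P)) w))\<^sup>2 \<le> a * ell x (mix w P)))"

(* weights of MIX-OGD: ogd_w ... k = w_{k+1}; sequences xs, Ps are indexed from 1 *)
fun ogd_w :: "(real^'m::finite) set \<Rightarrow> (real^'m \<Rightarrow> ('m \<Rightarrow> 'a \<Rightarrow> real) \<Rightarrow> ('a \<Rightarrow> real))
   \<Rightarrow> real \<Rightarrow> real^'m \<Rightarrow> (nat \<Rightarrow> 'a) \<Rightarrow> (nat \<Rightarrow> ('m \<Rightarrow> 'a \<Rightarrow> real)) \<Rightarrow> nat \<Rightarrow> real^'m" where
  "ogd_w W mix \<alpha> w1 xs Ps 0 = w1"
| "ogd_w W mix \<alpha> w1 xs Ps (Suc k) =
     closest_point W (ogd_w W mix \<alpha> w1 xs Ps k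
        - \<alpha> *\<^sub>R grad (\<lambda>w. ell (xs (Suc k)) (mix w (Ps (Suc k)))) (ogd_w W mix \<alpha> w1 xs Ps k))"

definition ogd_len :: "(real^'m::finite) set \<Rightarrow> (real^'m \<Rightarrow> ('m \<Rightarrow> 'a \<Rightarrow> real) \<Rightarrow> ('a \<Rightarrow> real))
   \<Rightarrow> real \<Rightarrow> real^'m \<Rightarrow> (nat \<Rightarrow> 'a) \<Rightarrow> (nat \<Rightarrow> ('m \<Rightarrow> 'a \<Rightarrow> real)) \<Rightarrow> nat \<Rightarrow> real" where
  "ogd_len W mix \<alpha> w1 xs Ps n =
     (\<Sum>k=1..n. ell (xs k) (mix (ogd_w W mix \<alpha> w1 xs Ps (k - 1)) (Ps k)))"

definition lstar :: "(real^'m::finite) set \<Rightarrow> (real^'m \<Rightarrow> ('m \<Rightarrow> 'a \<Rightarrow> real) \<Rightarrow> ('a \<Rightarrow> real))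
   \<Rightarrow> (nat \<Rightarrow> 'a) \<Rightarrow> (nat \<Rightarrow> ('m \<Rightarrow> 'a \<Rightarrow> real)) \<Rightarrow> nat \<Rightarrow> nat \<Rightarrow> real" where
  "lstar W mix ys Qs i j = (INF w\<in>W. \<Sum>k=i..j. ell (ys k) (mix w (Qs k)))"

definition segmentation :: "nat \<Rightarrow> nat \<Rightarrow> (nat \<Rightarrow> nat) \<Rightarrow> bool" where
  "segmentation n s t \<longleftrightarrow> 1 \<le> s \<and> s \<le> n \<and> t 1 = 1 \<and> t (s + 1) = n + 1 \<and>
     (\<forall>i\<in>{1..s}. t i < t (i + 1))"

end

theory Submission
  imports Defs
begin

(* Fix a comparator u in W. Convexity of the code length, the self-bounding gradient
   |grad l|^2 <= a l and non-expansiveness of the projection give for every round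
     (2 alpha - a alpha^2) l(w_k) <= 2 alpha l(u) + |w_k - u|^2 - |w_(k+1) - u|^2.
   Over one segment the distance terms telescope to at most |W|^2, so minimising over u bounds
   (2 alpha - a alpha^2) times the code length of the segment by 2 alpha l* + |W|^2. Summing over
   the s segments and dividing by 2 alpha - a alpha^2 gives both bounds; for the second step size
   the surplus term l*/sqrt n is at most c sqrt n because l* <= c n. *)

lemma convex_on_has_derivative_above_tangent:
  fixes f :: "'a::real_normed_vector \<Rightarrow> real"
  assumes convex: "convex_on S f" and w: "w \<in> S" and u: "u \<in> S"
    and deriv: "(f has_derivative D) (at w)"
  shows "f w + D (u - w) \<le> f u"
proof -
  define d where "d = u - w"
  define h where "h t = f (w + t *\<^sub>R d)" for t :: real
  have "((\<lambda>t. w + t *\<^sub>R d) has_derivative (\<lambda>t. t *\<^sub>R d)) (at 0)"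
    by (auto intro!: derivative_eq_intros)
  moreover have "(f has_derivative D) (at (w + 0 *\<^sub>R d))"
    using deriv by simp
  ultimately have "(h has_derivative (\<lambda>t. D (t *\<^sub>R d))) (at 0)"
    unfolding h_def using diff_chain_at[unfolded o_def] by blast
  moreover have "D (t *\<^sub>R d) = D d * t" for t
    using linear_scale[OF has_derivative_linear[OF deriv]] by simp
  ultimately have "(h has_field_derivative D d) (at 0)"
    by (simp add: has_field_derivative_def)
  then have "((\<lambda>t. (h t - h 0) / t) \<longlongrightarrow> D d) (at_right 0)"
    unfolding has_field_derivative_iff by (auto intro: tendsto_mono at_le)
  moreover have "eventually (\<lambda>t. (h t - h 0) / t \<le> f u - f w) (at_right 0)"
    using eventually_at_right_real[OF zero_less_one]
  proof eventually_elim
    case (elim t)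
    have "w + t *\<^sub>R d = (1 - t) *\<^sub>R w + t *\<^sub>R u"
      by (simp add: d_def algebra_simps)
    then have "h t \<le> (1 - t) * f w + t * f u"
      using convex_onD[OF convex, of t w u] elim w u by (simp add: h_def)
    then have "h t - h 0 \<le> t * (f u - f w)"
      by (simp add: h_def algebra_simps)
    then show ?case
      using elim by (simp add: divide_le_eq mult.commute)
  qed
  ultimately have "D d \<le> f u - f w"
    by (simp add: tendsto_upperbound)
  then show ?thesis
    by (simp add: d_def)
qed

lemma has_derivative_grad:
  assumes "f differentiable (at w)"
  shows "(f has_derivative (\<lambda>h. h \<bullet> grad f w)) (at w)"
proof -
  obtain D where D: "(f has_derivative D) (at w)"
    using assms differentiable_def by blast
  have "D = (\<lambda>h. h \<bullet> adjoint D 1)"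
    using adjoint_works[OF has_derivative_linear[OF D], of _ 1] by auto
  then have "GDERIV f w :> adjoint D 1"
    using D by (simp add: gderiv_def)
  then have "GDERIV f w :> grad f w"
    unfolding grad_def by (rule someI)
  then show ?thesis
    by (simp add: gderiv_def)
qed

lemma closest_point_gradient_step:
  fixes S :: "'a::euclidean_space set"
  assumes "convex S" "closed S" and w: "w \<in> S" and u: "u \<in> S"
    and "convex_on S f" and "(f has_derivative (\<lambda>h. h \<bullet> g)) (at w)" and "\<alpha> \<ge> 0"
  shows "(norm (closest_point S (w - \<alpha> *\<^sub>R g) - u))\<^sup>2
           \<le> (norm (w - u))\<^sup>2 - 2 * \<alpha> * (f w - f u) + \<alpha>\<^sup>2 * (norm g)\<^sup>2"
proof -
  have "norm (closest_point S (w - \<alpha> *\<^sub>R g) - u) \<le> norm ((w - u) - \<alpha> *\<^sub>R g)"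
    using closest_point_lipschitz[OF assms(1,2), of "w - \<alpha> *\<^sub>R g" u] closest_point_self[OF u] w
    by (auto simp: dist_norm algebra_simps)
  then have "(norm (closest_point S (w - \<alpha> *\<^sub>R g) - u))\<^sup>2 \<le> (norm ((w - u) - \<alpha> *\<^sub>R g))\<^sup>2"
    by (simp add: power_mono)
  also have "\<dots> = (norm (w - u))\<^sup>2 - 2 * \<alpha> * ((w - u) \<bullet> g) + \<alpha>\<^sup>2 * (norm g)\<^sup>2"
    unfolding power2_norm_eq_inner
    by (simp add: inner_commute algebra_simps power2_eq_square)
  also have "\<dots> \<le> (norm (w - u))\<^sup>2 - 2 * \<alpha> * (f w - f u) + \<alpha>\<^sup>2 * (norm g)\<^sup>2"
  proof -
    have "f w - f u \<le> (w - u) \<bullet> g"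
      using convex_on_has_derivative_above_tangent[OF assms(5) w u assms(6)]
      by (simp add: inner_diff_left)
    then show ?thesis
      using \<open>\<alpha> \<ge> 0\<close> by (simp add: mult_left_mono)
  qed
  finally show ?thesis .
qed

lemma ogd_w_in:
  assumes "nice_mixture W mix a" and "w1 \<in> W"
  shows "ogd_w W mix \<alpha> w1 xs Ps k \<in> W"
  using assms by (induction k) (auto simp: nice_mixture_def compact_imp_closed closest_point_in_set)

lemma ogd_step_bound:
  assumes nice: "nice_mixture W mix a" and w1: "w1 \<in> W" and "\<alpha> \<ge> 0"
    and P: "prob_matrix (Ps (Suc j))" and u: "u \<in> W"
  shows "(2 * \<alpha> - \<alpha>\<^sup>2 * a) * ell (xs (Suc j)) (mix (ogd_w W mix \<alpha> w1 xs Ps j) (Ps (Suc j)))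
           \<le> 2 * \<alpha> * ell (xs (Suc j)) (mix u (Ps (Suc j)))
             + ((norm (ogd_w W mix \<alpha> w1 xs Ps j - u))\<^sup>2
                - (norm (ogd_w W mix \<alpha> w1 xs Ps (Suc j) - u))\<^sup>2)"
proof -
  define w where "w = ogd_w W mix \<alpha> w1 xs Ps j"
  define f where "f = (\<lambda>v. ell (xs (Suc j)) (mix v (Ps (Suc j))))"
  define g where "g = grad f w"
  have w: "w \<in> W"
    unfolding w_def using nice w1 by (rule ogd_w_in)
  have "convex W" "closed W" "convex_on W f" "f differentiable (at w)" and grad_le: "(norm g)\<^sup>2 \<le> a * f w"
    using nice P w by (auto simp: nice_mixture_def compact_imp_closed f_def g_def)
  then have "(norm (closest_point W (w - \<alpha> *\<^sub>R g) - u))\<^sup>2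
               \<le> (norm (w - u))\<^sup>2 - 2 * \<alpha> * (f w - f u) + \<alpha>\<^sup>2 * (norm g)\<^sup>2"
    using closest_point_gradient_step[OF _ _ w u _ has_derivative_grad] \<open>\<alpha> \<ge> 0\<close>
    by (simp add: g_def)
  moreover have "\<alpha>\<^sup>2 * (norm g)\<^sup>2 \<le> \<alpha>\<^sup>2 * (a * f w)"
    using grad_le by (simp add: mult_left_mono)
  moreover have "(2 * \<alpha> - \<alpha>\<^sup>2 * a) * f w = 2 * \<alpha> * f w - \<alpha>\<^sup>2 * (a * f w)"
    and "2 * \<alpha> * (f w - f u) = 2 * \<alpha> * f w - 2 * \<alpha> * f u"
    by (simp_all add: algebra_simps)
  ultimately have "(2 * \<alpha> - \<alpha>\<^sup>2 * a) * f w
      \<le> 2 * \<alpha> * f u + (norm (w - u))\<^sup>2 - (norm (closest_point W (w - \<alpha> *\<^sub>R g) - u))\<^sup>2"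
    by linarith
  then show ?thesis
    by (simp add: w_def g_def f_def)
qed

lemma ogd_segment_comparator_bound:
  assumes nice: "nice_mixture W mix a" and w1: "w1 \<in> W" and "\<alpha> > 0" and u: "u \<in> W"
    and P: "\<forall>k\<in>{p..<q}. prob_matrix (Ps k)" and "1 \<le> p" "p \<le> q"
  shows "(2 * \<alpha> - \<alpha>\<^sup>2 * a) * (\<Sum>k\<in>{p..<q}. ell (xs k) (mix (ogd_w W mix \<alpha> w1 xs Ps (k - 1)) (Ps k)))
           \<le> 2 * \<alpha> * (\<Sum>k=p..q - 1. ell (xs k) (mix u (Ps k))) + (diameter W)\<^sup>2"
    (is "?c * _ \<le> _")
proof -
  obtain i where p: "p = Suc i"
    using \<open>1 \<le> p\<close> by (cases p) auto
  obtain j where q: "q = Suc j"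
    using \<open>1 \<le> p\<close> \<open>p \<le> q\<close> by (cases q) auto
  have "i \<le> j"
    using \<open>p \<le> q\<close> by (simp add: p q)
  define N where "N k = (norm (ogd_w W mix \<alpha> w1 xs Ps k - u))\<^sup>2" for k
  have "?c * (\<Sum>k\<in>{p..<q}. ell (xs k) (mix (ogd_w W mix \<alpha> w1 xs Ps (k - 1)) (Ps k)))
      = (\<Sum>k\<in>{i..<j}. ?c * ell (xs (Suc k)) (mix (ogd_w W mix \<alpha> w1 xs Ps k) (Ps (Suc k))))"
    unfolding p q sum.shift_bounds_Suc_ivl sum_distrib_left by simp
  also have "\<dots> \<le> (\<Sum>k\<in>{i..<j}. 2 * \<alpha> * ell (xs (Suc k)) (mix u (Ps (Suc k))) + (N k - N (Suc k)))"
  proof (rule sum_mono)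
    fix k
    assume "k \<in> {i..<j}"
    then have "prob_matrix (Ps (Suc k))"
      using P by (simp add: p q)
    then show "?c * ell (xs (Suc k)) (mix (ogd_w W mix \<alpha> w1 xs Ps k) (Ps (Suc k)))
        \<le> 2 * \<alpha> * ell (xs (Suc k)) (mix u (Ps (Suc k))) + (N k - N (Suc k))"
      unfolding N_def using \<open>\<alpha> > 0\<close> by (intro ogd_step_bound[OF nice w1 _ _ u]) simp_all
  qed
  also have "\<dots> = 2 * \<alpha> * (\<Sum>k=p..q - 1. ell (xs k) (mix u (Ps k))) + (N i - N j)"
  proof -
    have "(\<Sum>k\<in>{i..<j}. N k - N (Suc k)) = N i - N j"
      using sum_Suc_diff'[OF \<open>i \<le> j\<close>, of N] by (simp add: sum_subtractf)
    moreover have "(\<Sum>k\<in>{i..<j}. ell (xs (Suc k)) (mix u (Ps (Suc k))))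
        = (\<Sum>k=p..q - 1. ell (xs k) (mix u (Ps k)))"
      unfolding p q atLeastLessThanSuc_atLeastAtMost[symmetric] sum.shift_bounds_Suc_ivl by simp
    ultimately show ?thesis
      by (simp add: sum.distrib flip: sum_distrib_left)
  qed
  also have "N i - N j \<le> (diameter W)\<^sup>2"
  proof -
    have "bounded W"
      using nice by (simp add: nice_mixture_def compact_imp_bounded)
    then have "norm (ogd_w W mix \<alpha> w1 xs Ps i - u) \<le> diameter W"
      using diameter_bounded_bound[OF _ ogd_w_in[OF nice w1] u] by (simp add: dist_norm)
    then have "N i \<le> (diameter W)\<^sup>2"
      unfolding N_def by (simp add: power_mono)
    moreover have "0 \<le> N j"
      by (simp add: N_def)
    ultimately show ?thesis
      by linarith
  qed
  finally show ?thesis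
    by simp
qed

lemma ogd_segment_bound:
  assumes nice: "nice_mixture W mix a" and w1: "w1 \<in> W" and "\<alpha> > 0"
    and P: "\<forall>k\<in>{p..<q}. prob_matrix (Ps k)" and "1 \<le> p" "p \<le> q"
  shows "(2 * \<alpha> - \<alpha>\<^sup>2 * a) * (\<Sum>k\<in>{p..<q}. ell (xs k) (mix (ogd_w W mix \<alpha> w1 xs Ps (k - 1)) (Ps k)))
           \<le> 2 * \<alpha> * lstar W mix xs Ps p (q - 1) + (diameter W)\<^sup>2"
    (is "?lhs \<le> _")
proof -
  have "?lhs - (diameter W)\<^sup>2 \<le> 2 * \<alpha> * (\<Sum>k=p..q - 1. ell (xs k) (mix u (Ps k)))"
    if "u \<in> W" for u
    using ogd_segment_comparator_bound[OF nice w1 \<open>\<alpha> > 0\<close> that P \<open>1 \<le> p\<close> \<open>p \<le> q\<close>, of xs]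
    by simp
  then have "(?lhs - (diameter W)\<^sup>2) / (2 * \<alpha>) \<le> lstar W mix xs Ps p (q - 1)"
    unfolding lstar_def using w1 \<open>\<alpha> > 0\<close>
    by (intro cINF_greatest) (auto simp: divide_le_eq mult.commute)
  then show ?thesis
    using \<open>\<alpha> > 0\<close> by (simp add: pos_divide_le_eq mult.commute)
qed

lemma segmentation_mono:
  assumes seg: "segmentation n s t" and "1 \<le> i" "i \<le> j" "j \<le> s + 1"
  shows "t i \<le> t j"
  using \<open>i \<le> j\<close> \<open>j \<le> s + 1\<close>
proof (induction j rule: dec_induct)
  case base
  then show ?case by simp
next
  case (step m)
  then have "t m < t (m + 1)"
    using seg \<open>1 \<le> i\<close> by (simp add: segmentation_def)
  with step show ?case by simp
qed

lemma segmentation_segment: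
  assumes seg: "segmentation n s t" and i: "i \<in> {1..s}"
  shows "1 \<le> t i" and "t i < t (i + 1)" and "t (i + 1) \<le> n + 1"
proof -
  show "1 \<le> t i"
    using segmentation_mono[OF seg, of 1 i] seg i by (simp add: segmentation_def)
  show "t i < t (i + 1)"
    using seg i by (simp add: segmentation_def)
  show "t (i + 1) \<le> n + 1"
    using segmentation_mono[OF seg, of "i + 1" "s + 1"] seg i by (simp add: segmentation_def)
qed

lemma sum_segmentation:
  fixes F :: "nat \<Rightarrow> 'b::ab_group_add"
  assumes seg: "segmentation n s t"
  shows "(\<Sum>i=1..s. sum F {t i..<t (i + 1)}) = sum F {1..n}"
proof -
  define G where "G k = sum F {1..<k}" for k
  have "sum F {t i..<t (i + 1)} = G (t (Suc i)) - G (t i)" if "i \<in> {1..s}" for i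
    using sum.atLeastLessThan_concat[of 1 "t i" "t (i + 1)" F] segmentation_segment[OF seg that]
    by (simp add: G_def algebra_simps)
  then have "(\<Sum>i=1..s. sum F {t i..<t (i + 1)}) = (\<Sum>i=1..s. G (t (Suc i)) - G (t i))"
    by (rule sum.cong[OF refl])
  also have "\<dots> = G (t (Suc s)) - G (t 1)"
    by (rule sum_Suc_diff) simp
  also have "\<dots> = sum F {1..n}"
    using seg by (simp add: segmentation_def G_def atLeastLessThanSuc_atLeastAtMost)
  finally show ?thesis .
qed

lemma ogd_len_segmentation_bound:
  assumes nice: "nice_mixture W mix a" and w1: "w1 \<in> W" and "\<alpha> > 0"
    and P: "\<forall>k\<in>{1..n}. prob_matrix (Ps k)" and seg: "segmentation n s t"
  shows "(2 * \<alpha> - \<alpha>\<^sup>2 * a) * ogd_len W mix \<alpha> w1 xs Ps n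
           \<le> 2 * \<alpha> * (\<Sum>i=1..s. lstar W mix xs Ps (t i) (t (i + 1) - 1)) + real s * (diameter W)\<^sup>2"
proof -
  define F where "F k = ell (xs k) (mix (ogd_w W mix \<alpha> w1 xs Ps (k - 1)) (Ps k))" for k
  have "(2 * \<alpha> - \<alpha>\<^sup>2 * a) * ogd_len W mix \<alpha> w1 xs Ps n
      = (\<Sum>i=1..s. (2 * \<alpha> - \<alpha>\<^sup>2 * a) * sum F {t i..<t (i + 1)})"
    unfolding ogd_len_def sum_segmentation[OF seg, symmetric] sum_distrib_left F_def ..
  also have "\<dots> \<le> (\<Sum>i=1..s. 2 * \<alpha> * lstar W mix xs Ps (t i) (t (i + 1) - 1) + (diameter W)\<^sup>2)"
  proof (rule sum_mono)
    fix i
    assume "i \<in> {1..s}"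
    note bounds = segmentation_segment[OF seg this]
    then have "\<forall>k\<in>{t i..<t (i + 1)}. prob_matrix (Ps k)"
      using P by auto
    then show "(2 * \<alpha> - \<alpha>\<^sup>2 * a) * sum F {t i..<t (i + 1)}
        \<le> 2 * \<alpha> * lstar W mix xs Ps (t i) (t (i + 1) - 1) + (diameter W)\<^sup>2"
      unfolding F_def using ogd_segment_bound[OF nice w1 \<open>\<alpha> > 0\<close>] bounds by simp
  qed
  also have "\<dots> = 2 * \<alpha> * (\<Sum>i=1..s. lstar W mix xs Ps (t i) (t (i + 1) - 1)) + real s * (diameter W)\<^sup>2"
    by (simp add: sum.distrib sum_distrib_left)
  finally show ?thesis .
qed

lemma lstar_shift:
  "lstar W mix ys Qs (i + d) (j + d) = lstar W mix (\<lambda>k. ys (k + d)) (\<lambda>k. Qs (k + d)) i j"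
  unfolding lstar_def by (simp add: sum.shift_bounds_cl_nat_ivl)

lemma lstar_segmentation_sum_le:
  fixes W :: "(real^'m::finite) set"
    and mix :: "real^'m \<Rightarrow> ('m \<Rightarrow> 'a::finite \<Rightarrow> real) \<Rightarrow> ('a \<Rightarrow> real)"
  assumes lstar_linear: "\<forall>k::nat. k \<ge> 1 \<longrightarrow> (\<forall>(ys :: nat \<Rightarrow> 'a) (Qs :: nat \<Rightarrow> ('m \<Rightarrow> 'a \<Rightarrow> real)).
                     (\<forall>j\<in>{1..k}. prob_matrix (Qs j)) \<longrightarrow> lstar W mix ys Qs 1 k \<le> c * real k)"
    and P: "\<forall>k\<in>{1..n}. prob_matrix (Ps k)" and seg: "segmentation n s t"
  shows "(\<Sum>i=1..s. lstar W mix xs Ps (t i) (t (i + 1) - 1)) \<le> c * real n"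
proof -
  have "lstar W mix xs Ps (t i) (t (i + 1) - 1) \<le> c * (\<Sum>k\<in>{t i..<t (i + 1)}. 1)"
    if i: "i \<in> {1..s}" for i
  proof -
    define d where "d = t i - 1"
    define len where "len = t (i + 1) - t i"
    note bounds = segmentation_segment[OF seg i]
    have "lstar W mix xs Ps (t i) (t (i + 1) - 1) = lstar W mix (\<lambda>k. xs (k + d)) (\<lambda>k. Ps (k + d)) 1 len"
      using lstar_shift[of W mix xs Ps 1 d len] bounds by (simp add: d_def len_def)
    also have "\<dots> \<le> c * real len"
    proof -
      have "j + d \<in> {1..n}" if "j \<in> {1..len}" for j
        using that bounds by (auto simp: d_def len_def)
      then have "\<forall>j\<in>{1..len}. prob_matrix (Ps (j + d))"
        using P by blast
      moreover have "len \<ge> 1"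
        using bounds by (simp add: len_def)
      ultimately show ?thesis
        using lstar_linear[rule_format, where ys = "\<lambda>k. xs (k + d)" and Qs = "\<lambda>k. Ps (k + d)"] by blast
    qed
    finally show ?thesis
      by (simp add: len_def)
  qed
  then have "(\<Sum>i=1..s. lstar W mix xs Ps (t i) (t (i + 1) - 1))
      \<le> (\<Sum>i=1..s. c * (\<Sum>k\<in>{t i..<t (i + 1)}. 1))"
    by (rule sum_mono)
  also have "\<dots> = c * real n"
    unfolding sum_distrib_left[symmetric] sum_segmentation[OF seg] by simp
  finally show ?thesis .
qed

lemma ogd_len_bound_multiplicative:
  assumes nice: "nice_mixture W mix a" and w1: "w1 \<in> W"
    and P: "\<forall>k\<in>{1..n}. prob_matrix (Ps k)" and seg: "segmentation n s t" and "b > 1"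
  shows "ogd_len W mix (2 * (1 - 1 / b) / a) w1 xs Ps n
           \<le> a * b\<^sup>2 * (diameter W)\<^sup>2 / (4 * (b - 1)) * real s
             + b * (\<Sum>i=1..s. lstar W mix xs Ps (t i) (t (i + 1) - 1))"
proof -
  define \<alpha> where "\<alpha> = 2 * (1 - 1 / b) / a"
  define L where "L = ogd_len W mix \<alpha> w1 xs Ps n"
  define S where "S = (\<Sum>i=1..s. lstar W mix xs Ps (t i) (t (i + 1) - 1))"
  define D where "D = (diameter W)\<^sup>2"
  have "a > 0"
    using nice by (simp add: nice_mixture_def)
  then have "\<alpha> > 0"
    using \<open>b > 1\<close> by (simp add: \<alpha>_def field_simps)
  have rate: "2 * \<alpha> - \<alpha>\<^sup>2 * a = 2 * \<alpha> / b"
    using \<open>b > 1\<close> \<open>a > 0\<close> by (simp add: \<alpha>_def field_simps power2_eq_square)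
  have "L = b / (2 * \<alpha>) * ((2 * \<alpha> - \<alpha>\<^sup>2 * a) * L)"
    using \<open>\<alpha> > 0\<close> \<open>b > 1\<close> by (simp add: rate)
  also have "\<dots> \<le> b / (2 * \<alpha>) * (2 * \<alpha> * S + real s * D)"
    using ogd_len_segmentation_bound[OF nice w1 \<open>\<alpha> > 0\<close> P seg] \<open>\<alpha> > 0\<close> \<open>b > 1\<close>
    by (intro mult_left_mono) (simp_all add: L_def S_def D_def)
  also have "\<dots> = b / (2 * \<alpha>) * D * real s + b * S"
    using \<open>\<alpha> > 0\<close> by (simp add: field_simps)
  also have "b / (2 * \<alpha>) = a * b\<^sup>2 / (4 * (b - 1))"
    using \<open>b > 1\<close> \<open>a > 0\<close> by (simp add: \<alpha>_def field_simps power2_eq_square)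
  finally show ?thesis
    by (simp add: L_def S_def D_def \<alpha>_def)
qed

lemma ogd_len_bound_additive:
  fixes W :: "(real^'m::finite) set"
    and mix :: "real^'m \<Rightarrow> ('m \<Rightarrow> 'a::finite \<Rightarrow> real) \<Rightarrow> ('a \<Rightarrow> real)"
  assumes nice: "nice_mixture W mix a" and w1: "w1 \<in> W" and "n \<ge> 1"
    and P: "\<forall>k\<in>{1..n}. prob_matrix (Ps k)" and seg: "segmentation n s t"
    and lstar_linear: "\<forall>k::nat. k \<ge> 1 \<longrightarrow> (\<forall>(ys :: nat \<Rightarrow> 'a) (Qs :: nat \<Rightarrow> ('m \<Rightarrow> 'a \<Rightarrow> real)).
                   (\<forall>j\<in>{1..k}. prob_matrix (Qs j)) \<longrightarrow> lstar W mix ys Qs 1 k \<le> c * real k)"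
  shows "ogd_len W mix (2 / a * inverse (1 + sqrt (real n))) w1 xs Ps n
           \<le> (a * real s * (diameter W)\<^sup>2 + c) * sqrt (real n)
             + (\<Sum>i=1..s. lstar W mix xs Ps (t i) (t (i + 1) - 1))"
proof -
  define r where "r = sqrt (real n)"
  define \<alpha> where "\<alpha> = 2 / (a * (1 + r))"
  define L where "L = ogd_len W mix \<alpha> w1 xs Ps n"
  define S where "S = (\<Sum>i=1..s. lstar W mix xs Ps (t i) (t (i + 1) - 1))"
  define D where "D = (diameter W)\<^sup>2"
  have "a > 0"
    using nice by (simp add: nice_mixture_def)
  have "r \<ge> 1"
    using \<open>n \<ge> 1\<close> by (simp add: r_def)
  have "\<alpha> > 0"
    using \<open>a > 0\<close> \<open>r \<ge> 1\<close> by (simp add: \<alpha>_def)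
  have "\<alpha>\<^sup>2 * a = 2 * \<alpha> / (1 + r)"
    using \<open>a > 0\<close> by (simp add: \<alpha>_def power2_eq_square)
  then have rate: "2 * \<alpha> - \<alpha>\<^sup>2 * a = 2 * \<alpha> * r / (1 + r)"
    using \<open>r \<ge> 1\<close> by (simp add: field_simps)
  have "S / r \<le> c * r"
    using lstar_segmentation_sum_le[OF lstar_linear P seg] \<open>r \<ge> 1\<close>
    by (simp add: S_def r_def pos_divide_le_eq power2_eq_square mult.assoc)
  have "(1 + r)\<^sup>2 \<le> (2 * r)\<^sup>2"
    using \<open>r \<ge> 1\<close> by (intro power_mono) auto
  then have "(1 + r) / (2 * \<alpha> * r) \<le> a * r"
    using \<open>a > 0\<close> \<open>r \<ge> 1\<close> by (simp add: \<alpha>_def pos_divide_le_eq power2_eq_square)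
  have "L = (1 + r) / (2 * \<alpha> * r) * ((2 * \<alpha> - \<alpha>\<^sup>2 * a) * L)"
    using \<open>\<alpha> > 0\<close> \<open>r \<ge> 1\<close> by (simp add: rate)
  also have "\<dots> \<le> (1 + r) / (2 * \<alpha> * r) * (2 * \<alpha> * S + real s * D)"
    using ogd_len_segmentation_bound[OF nice w1 \<open>\<alpha> > 0\<close> P seg] \<open>\<alpha> > 0\<close> \<open>r \<ge> 1\<close>
    by (intro mult_left_mono) (simp_all add: L_def S_def D_def)
  also have "\<dots> = S + S / r + (1 + r) / (2 * \<alpha> * r) * (real s * D)"
    using \<open>\<alpha> > 0\<close> \<open>r \<ge> 1\<close> by (simp add: field_simps)
  also have "\<dots> \<le> S + c * r + a * r * (real s * D)"
    using \<open>S / r \<le> c * r\<close> \<open>(1 + r) / (2 * \<alpha> * r) \<le> a * r\<close>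
    by (intro add_mono order_refl mult_right_mono) (simp_all add: D_def)
  finally have "L \<le> S + c * r + a * r * (real s * D)" .
  moreover have "2 / a * inverse (1 + sqrt (real n)) = \<alpha>"
    by (simp add: \<alpha>_def r_def divide_inverse)
  ultimately show ?thesis
    by (simp add: L_def S_def D_def r_def algebra_simps)
qed

theorem theorem1:
  fixes W :: "(real^'m::finite) set"
    and mix :: "real^'m \<Rightarrow> ('m \<Rightarrow> 'a::finite \<Rightarrow> real) \<Rightarrow> ('a \<Rightarrow> real)"
    and a :: real and n :: nat and xs :: "nat \<Rightarrow> 'a"
    and Ps :: "nat \<Rightarrow> ('m \<Rightarrow> 'a \<Rightarrow> real)" and w1 :: "real^'m"
  assumes "CARD('a) > 1" and "CARD('m) > 1"
    and "nice_mixture W mix a"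
    and "n \<ge> 1"
    and "\<forall>k\<in>{1..n}. prob_matrix (Ps k)"
    and "w1 \<in> W"
  shows "(\<forall>b::real. b > 1 \<longrightarrow>
            (\<forall>s t. segmentation n s t \<longrightarrow>
               ogd_len W mix (2 * (1 - 1 / b) / a) w1 xs Ps n
                 \<le> a * b\<^sup>2 * (diameter W)\<^sup>2 / (4 * (b - 1)) * real s
                   + b * (\<Sum>i=1..s. lstar W mix xs Ps (t i) (t (i + 1) - 1))))
       \<and> (\<forall>c::real. c > 0 \<longrightarrow>
            (\<forall>k::nat. k \<ge> 1 \<longrightarrow> (\<forall>(ys :: nat \<Rightarrow> 'a) (Qs :: nat \<Rightarrow> ('m \<Rightarrow> 'a \<Rightarrow> real)).
                (\<forall>j\<in>{1..k}. prob_matrix (Qs j)) \<longrightarrow> lstar W mix ys Qs 1 k \<le> c * real k)) \<longrightarrow>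
            (\<forall>s t. segmentation n s t \<longrightarrow>
               ogd_len W mix (2 / a * inverse (1 + sqrt (real n))) w1 xs Ps n
                 \<le> (a * real s * (diameter W)\<^sup>2 + c) * sqrt (real n)
                   + (\<Sum>i=1..s. lstar W mix xs Ps (t i) (t (i + 1) - 1))))"
  using ogd_len_bound_multiplicative[OF assms(3,6,5)] ogd_len_bound_additive[OF assms(3,6,4,5)]
  by blast

end
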